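(* Let $P$ be a finite poset. There exist a constant $C(P)$ depending only on $P$ and, for each positive integer $n$, a constant $\alpha_n$ depending only on $n$, such that for all integers $n\ge\dim P$ and $k\ge 2$: if $S\subseteq[k]^n$ does not contain a copy of $P$, then $$L_{[k]^n}(S)\le C(P)\,\alpha_n\log k.$$
   Context: $[k]^n$ is the set of $n$-tuples with entries in $[k]=\{1,\dots,k\}$, ordered pointwise. Its levels are $A_i=\{(a_1,\dots,a_n)\in[k]^n: a_1+\dots+a_n=n+i\}$ for $i=0,\dots,kn-n$. For $S\subseteq[k]^n$, the Lubell mass is $L_{[k]^n}(S)=\sum_{i=0}^{kn-n}\frac{|S\cap A_i|}{|A_i|}$. A subset $P'$ of a poset $Q$ is a copy of $P$ if the subposet of $Q$ induced on $P'$ is isomorphic to $P$. The (Dushnik–Miller) dimension $\dim P$ is the smallest positive integer $d$ for which there exist bijections $L_1,\dots,L_d:P\to[|P|]$ such that $p\le_P q$ iff $L_i(p)\le L_i(q)$ for every $i\in[d]$. *)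

theory Defs
  imports Complex_Main "HOL-Library.FuncSet"
begin

definition grid :: "nat \<Rightarrow> nat \<Rightarrow> (nat \<Rightarrow> nat) set" where
  "grid k n = PiE {0..<n} (\<lambda>_. {1..k})"

definition grid_le :: "nat \<Rightarrow> (nat \<Rightarrow> nat) \<Rightarrow> (nat \<Rightarrow> nat) \<Rightarrow> bool" where
  "grid_le n a b \<longleftrightarrow> (\<forall>i<n. a i \<le> b i)"

definition grid_level :: "nat \<Rightarrow> nat \<Rightarrow> nat \<Rightarrow> (nat \<Rightarrow> nat) set" where
  "grid_level k n i = {a \<in> grid k n. (\<Sum>j<n. a j) = n + i}"

definition lubell_mass :: "nat \<Rightarrow> nat \<Rightarrow> (nat \<Rightarrow> nat) set \<Rightarrow> real" where
  "lubell_mass k n S =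
     (\<Sum>i = 0..k*n - n. real (card (S \<inter> grid_level k n i)) / real (card (grid_level k n i)))"

definition contains_copy :: "nat \<Rightarrow> (nat \<Rightarrow> nat) set \<Rightarrow> nat set \<Rightarrow> (nat \<times> nat) set \<Rightarrow> bool" where
  "contains_copy n S X R \<longleftrightarrow>
     (\<exists>P' f. P' \<subseteq> S \<and> bij_betw f X P' \<and>
        (\<forall>p\<in>X. \<forall>q\<in>X. (p, q) \<in> R \<longleftrightarrow> grid_le n (f p) (f q)))"

definition poset_dim :: "nat set \<Rightarrow> (nat \<times> nat) set \<Rightarrow> nat" where
  "poset_dim X R = (LEAST d. d > 0 \<and>
     (\<exists>L :: nat \<Rightarrow> nat \<Rightarrow> nat. (\<forall>i<d. bij_betw (L i) X {1..card X}) \<and>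
        (\<forall>p\<in>X. \<forall>q\<in>X. (p, q) \<in> R \<longleftrightarrow> (\<forall>i<d. L i p \<le> L i q))))"

end

theory Submission
  imports Defs "HOL-Library.Product_Lexorder"
begin

text \<open>If \<open>L_1, ..., L_d\<close> realize \<open>P\<close> and \<open>d \<le> n\<close>, then points \<open>g p \<in> S\<close> whose \<open>i\<close>-th coordinates
  increase strictly along \<open>L_i\<close> (with \<open>L_1\<close> reused for \<open>i > d\<close>) form a copy of \<open>P\<close>. Sets in
  \<open>[t]^n\<close> avoiding such an \<open>n\<close>-dimensional permutation pattern have \<open>O(t^(n-1))\<close> points by the
  Marcus--Tardos block contraction (Klazar--Marcus): with blocks of side \<open>s = 4m^2\<close>, a block meeting
  \<open>S\<close> in fewer than \<open>m\<close> offsets in every coordinate holds at most \<open>(m-1)^n\<close> points, and the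
  other blocks are few by induction on the dimension. The points of level at most \<open>r\<close> lie, after
  a shift, in \<open>[r+1]^n\<close>, so at most \<open>c (r+1)^(n-1)\<close> points of \<open>S\<close> lie in the lowest \<open>r + 1\<close>
  levels; the reflection \<open>x \<mapsto> k + 1 - x\<close> gives the same for the highest ones. As level \<open>i\<close> has
  at least \<open>(min(i, N-i, k-1) / n)^(n-1)\<close> elements, summation by parts turns these prefix bounds
  into a Lubell mass of \<open>O(n^(n-1) log (n k))\<close>.\<close>

section \<open>Permutation patterns\<close>

definition contains_pattern ::
    "nat set \<Rightarrow> (nat \<Rightarrow> nat \<Rightarrow> nat) \<Rightarrow> nat set \<Rightarrow> (nat \<Rightarrow> nat) set \<Rightarrow> bool" where
  "contains_pattern I \<sigma> X S \<longleftrightarrow> (\<exists>g. (\<forall>p\<in>X. g p \<in> S) \<and>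
      (\<forall>i\<in>I. \<forall>p\<in>X. \<forall>q\<in>X. \<sigma> i p < \<sigma> i q \<longrightarrow> g p i < g q i))"

lemma contains_pattern_mono:
  "contains_pattern I \<sigma> X A \<Longrightarrow> A \<subseteq> B \<Longrightarrow> contains_pattern I \<sigma> X B"
  unfolding contains_pattern_def by blast

lemma contains_pattern_pullback:
  assumes "contains_pattern I \<sigma> X (f ` A)"
    and "\<And>x y i. x \<in> A \<Longrightarrow> y \<in> A \<Longrightarrow> i \<in> I \<Longrightarrow> f x i < f y i \<Longrightarrow> x i < y i"
  shows "contains_pattern I \<sigma> X A"
proof -
  obtain g where g: "\<forall>p\<in>X. g p \<in> f ` A"
    "\<forall>i\<in>I. \<forall>p\<in>X. \<forall>q\<in>X. \<sigma> i p < \<sigma> i q \<longrightarrow> g p i < g q i"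
    using assms(1) unfolding contains_pattern_def by blast
  define g' where "g' p = inv_into A f (g p)" for p
  have g': "g' p \<in> A" "f (g' p) = g p" if "p \<in> X" for p
    using g(1) that by (auto simp: g'_def inv_into_into f_inv_into_f)
  have "g' p i < g' q i" if "i \<in> I" "p \<in> X" "q \<in> X" "\<sigma> i p < \<sigma> i q" for i p q
    using g(2) g' assms(2) that by (metis (no_types, lifting))
  with g' show ?thesis unfolding contains_pattern_def by blast
qed

lemma exists_strict_mono_into:
  fixes A B :: "nat set"
  assumes "finite A" "finite B" "card A \<le> card B"
  shows "\<exists>h. (\<forall>a\<in>A. h a \<in> B) \<and> (\<forall>a\<in>A. \<forall>a'\<in>A. a < a' \<longrightarrow> h a < h a')"
proof -
  define xs where "xs = sorted_list_of_set B"
  define r where "r a = card {x\<in>A. x < a}" for a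
  have len: "length xs = card B" and sorted: "sorted_wrt (<) xs" and set: "set xs = B"
    using assms(2) by (simp_all add: xs_def)
  have r_less: "r a < card A" if "a \<in> A" for a
    unfolding r_def using assms(1) that by (intro psubset_card_mono) auto
  have r_mono: "r a < r a'" if "a \<in> A" "a' \<in> A" "a < a'" for a a'
    unfolding r_def using assms(1) that by (intro psubset_card_mono) auto
  show ?thesis
  proof (intro exI[of _ "\<lambda>a. xs ! r a"] conjI ballI impI)
    fix a assume "a \<in> A"
    thus "xs ! r a \<in> B" using r_less len assms(3) set nth_mem by (metis less_le_trans)
  next
    fix a a' assume "a \<in> A" "a' \<in> A" "a < a'"
    thus "xs ! r a < xs ! r a'" using r_mono r_less len assms(3) sorted sorted_wrt_nth_less
      by (metis less_le_trans)
  qed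
qed

lemma card_le_prod_card_projections:
  assumes "finite I" "A \<subseteq> extensional I"
  shows "card A \<le> (\<Prod>j\<in>I. card ((\<lambda>x. x j) ` A))"
proof (cases "finite A")
  case True
  have "A \<subseteq> PiE I (\<lambda>j. (\<lambda>x. x j) ` A)" using assms(2) by (auto simp: PiE_def)
  hence "card A \<le> card (PiE I (\<lambda>j. (\<lambda>x. x j) ` A))"
    using True assms(1) by (intro card_mono finite_PiE) auto
  thus ?thesis using assms(1) by (simp add: card_PiE)
qed simp

lemma card_eq_sum_card_fibres:
  "finite S \<Longrightarrow> card S = (\<Sum>b\<in>f ` S. card {x\<in>S. f x = b})"
  by (subst card_UN_disjoint[symmetric]) (auto intro: arg_cong[where f = card])

section \<open>The Marcus--Tardos bound\<close>

definition avoidance_bound :: "nat \<Rightarrow> nat \<Rightarrow> real \<Rightarrow> bool" where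
  "avoidance_bound d m c \<longleftrightarrow> (\<forall>I X \<sigma> t S. finite I \<and> card I = d \<and> finite X \<and> card X = m \<and>
     (\<forall>i\<in>I. inj_on (\<sigma> i) X) \<and> S \<subseteq> PiE I (\<lambda>_. {..<t}) \<and> \<not> contains_pattern I \<sigma> X S \<longrightarrow>
     real (card S) \<le> c * real t ^ (d - 1))"

lemma avoidance_boundD:
  "avoidance_bound d m c \<Longrightarrow> finite I \<Longrightarrow> card I = d \<Longrightarrow> finite X \<Longrightarrow> card X = m \<Longrightarrow>
   (\<And>i. i \<in> I \<Longrightarrow> inj_on (\<sigma> i) X) \<Longrightarrow> S \<subseteq> PiE I (\<lambda>_. {..<t}) \<Longrightarrow>
   \<not> contains_pattern I \<sigma> X S \<Longrightarrow> real (card S) \<le> c * real t ^ (d - 1)"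
  unfolding avoidance_bound_def by blast

lemma avoidance_bound_one: "avoidance_bound 1 m (real m)"
  unfolding avoidance_bound_def
proof (intro allI impI, elim conjE)
  fix I X \<sigma> t S assume "finite I" and "card I = 1" and X_fin: "finite X" and X_card: "card X = m"
    and inj: "\<forall>i\<in>I. inj_on (\<sigma> i) X" and S: "S \<subseteq> PiE I (\<lambda>_. {..<t})"
    and avoid: "\<not> contains_pattern I \<sigma> X S"
  obtain j where I: "I = {j}" using \<open>card I = 1\<close> card_1_singletonE by blast
  have S_fin: "finite S" using S I by (meson finite_PiE finite_lessThan finite_subset finite.intros)
  have inj_S: "inj_on (\<lambda>x. x j) S"
  proof (rule inj_onI)
    fix x y assume "x \<in> S" "y \<in> S" "x j = y j"
    with S I show "x = y" by (intro PiE_ext[of _ I "\<lambda>_. {..<t}"]) auto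
  qed
  show "real (card S) \<le> real m * real t ^ (1 - 1)"
  proof (rule ccontr)
    assume "\<not> ?thesis"
    hence "card (\<sigma> j ` X) \<le> card ((\<lambda>x. x j) ` S)"
      using inj I X_card by (simp add: card_image inj_S)
    then obtain h where h: "\<forall>a\<in>\<sigma> j ` X. h a \<in> (\<lambda>x. x j) ` S"
      "\<forall>a\<in>\<sigma> j ` X. \<forall>a'\<in>\<sigma> j ` X. a < a' \<longrightarrow> h a < h a'"
      using exists_strict_mono_into[of "\<sigma> j ` X" "(\<lambda>x. x j) ` S"] X_fin S_fin by blast
    have "contains_pattern I \<sigma> X ((\<lambda>x _. x j) ` S)"
      unfolding contains_pattern_def using h I
      by (intro exI[of _ "\<lambda>p _. h (\<sigma> j p)"]) fastforce
    hence "contains_pattern I \<sigma> X S" by (rule contains_pattern_pullback) (use I in auto)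
    with avoid show False ..
  qed
qed

definition block_index :: "nat \<Rightarrow> nat set \<Rightarrow> (nat \<Rightarrow> nat) \<Rightarrow> (nat \<Rightarrow> nat)" where
  "block_index s I x = restrict (\<lambda>i. x i div s) I"

definition block_offsets :: "nat \<Rightarrow> nat set \<Rightarrow> (nat \<Rightarrow> nat) set \<Rightarrow> nat \<Rightarrow> (nat \<Rightarrow> nat) \<Rightarrow> nat set" where
  "block_offsets s I S j b = (\<lambda>x. x j mod s) ` {x\<in>S. block_index s I x = b}"

lemma block_index_in_PiE:
  assumes "x \<in> PiE I (\<lambda>_. {..<t})" "t \<le> u * s"
  shows "block_index s I x \<in> PiE I (\<lambda>_. {..<u})"
proof -
  have "x i div s < u" if "i \<in> I" for i
  proof -
    have "x i < u * s" using assms that by (auto simp: PiE_def Pi_def)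
    thus ?thesis by (simp add: less_mult_imp_div_less)
  qed
  thus ?thesis by (simp add: block_index_def)
qed

lemma block_offsets_subset: "0 < s \<Longrightarrow> block_offsets s I S j b \<subseteq> {..<s}"
  by (auto simp: block_offsets_def)

lemma not_contains_pattern_blocks:
  "\<not> contains_pattern I \<sigma> X S \<Longrightarrow> \<not> contains_pattern I \<sigma> X (block_index s I ` S)"
  using contains_pattern_pullback[of I \<sigma> X "block_index s I" S]
  by (metis block_index_def div_le_mono not_less restrict_apply')

lemma block_decomposition:
  "i \<in> I \<Longrightarrow> x i = block_index s I x i * s + x i mod s"
  by (simp add: block_index_def)

lemma card_block_fibre_le:
  assumes "finite I" "S \<subseteq> extensional I"
  shows "card {x\<in>S. block_index s I x = b} \<le> (\<Prod>j\<in>I. card (block_offsets s I S j b))"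
proof -
  define F where "F = {x\<in>S. block_index s I x = b}"
  define \<phi> where "\<phi> x = restrict (\<lambda>j. x j mod s) I" for x :: "nat \<Rightarrow> nat"
  have "inj_on \<phi> F"
  proof (rule inj_onI)
    fix x y assume "x \<in> F" "y \<in> F" "\<phi> x = \<phi> y"
    hence "x i = y i" if "i \<in> I" for i
      using that block_decomposition[of i I x s] block_decomposition[of i I y s]
      by (auto simp: F_def \<phi>_def fun_eq_iff split: if_splits)
    with \<open>x \<in> F\<close> \<open>y \<in> F\<close> assms(2) show "x = y"
      by (auto simp: F_def intro!: extensionalityI[of _ I])
  qed
  hence "card F = card (\<phi> ` F)" by (rule card_image[symmetric])
  also have "\<dots> \<le> (\<Prod>j\<in>I. card ((\<lambda>y. y j) ` \<phi> ` F))"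
    by (rule card_le_prod_card_projections[OF assms(1)]) (auto simp: \<phi>_def)
  also have "\<dots> = (\<Prod>j\<in>I. card (block_offsets s I S j b))"
    by (intro prod.cong refl) (simp add: image_image \<phi>_def F_def block_offsets_def)
  finally show ?thesis unfolding F_def .
qed

lemma inj_on_restrict_minus:
  assumes "C \<subseteq> extensional I" "\<And>b. b \<in> C \<Longrightarrow> b j = v"
  shows "inj_on (\<lambda>b. restrict b (I - {j})) C"
proof (rule inj_onI)
  fix b b' assume "b \<in> C" "b' \<in> C" "restrict b (I - {j}) = restrict b' (I - {j})"
  with assms show "b = b'"
    by (intro extensionalityI[of _ I]) (auto simp: fun_eq_iff split: if_splits)
qed

text \<open>Blocks of one layer share their \<open>j\<close>-th block coordinate and all meet the same \<open>m\<close> offsets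
  \<open>M\<close> in coordinate \<open>j\<close>; picking offsets from \<open>M\<close> increasing along \<open>\<sigma> j\<close> lifts a pattern among
  the projected blocks to one in \<open>S\<close>.\<close>
lemma contains_pattern_lift_layer:
  assumes "finite X" "j \<in> I" "inj_on (\<sigma> j) X" "finite M" "card X \<le> card M"
    and layer: "\<And>b. b \<in> C \<Longrightarrow> b j = v \<and> M \<subseteq> block_offsets s I S j b"
    and "contains_pattern (I - {j}) \<sigma> X ((\<lambda>b. restrict b (I - {j})) ` C)"
  shows "contains_pattern I \<sigma> X S"
proof -
  obtain g where g_in: "\<forall>p\<in>X. g p \<in> (\<lambda>b. restrict b (I - {j})) ` C"
    and g_mono: "\<forall>i\<in>I - {j}. \<forall>p\<in>X. \<forall>q\<in>X. \<sigma> i p < \<sigma> i q \<longrightarrow> g p i < g q i"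
    using assms(7) unfolding contains_pattern_def by blast
  define b where "b p = inv_into C (\<lambda>b. restrict b (I - {j})) (g p)" for p
  have b: "b p \<in> C" "restrict (b p) (I - {j}) = g p" if "p \<in> X" for p
  proof -
    have "g p \<in> (\<lambda>b. restrict b (I - {j})) ` C" using g_in that by blast
    from inv_into_into[OF this] f_inv_into_f[OF this]
    show "b p \<in> C" "restrict (b p) (I - {j}) = g p" unfolding b_def by simp_all
  qed
  have "card (\<sigma> j ` X) \<le> card M" using assms(3,5) by (simp add: card_image)
  then obtain h where h_in: "\<forall>a\<in>\<sigma> j ` X. h a \<in> M"
    and h_mono: "\<forall>a\<in>\<sigma> j ` X. \<forall>a'\<in>\<sigma> j ` X. a < a' \<longrightarrow> h a < h a'"
    using exists_strict_mono_into[of "\<sigma> j ` X" M] assms(1,4) by blast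
  have "\<exists>x\<in>S. block_index s I x = b p \<and> x j mod s = h (\<sigma> j p)" if "p \<in> X" for p
    using h_in layer[OF b(1)[OF that]] that by (force simp: block_offsets_def)
  then obtain x where x: "\<And>p. p \<in> X \<Longrightarrow>
      x p \<in> S \<and> block_index s I (x p) = b p \<and> x p j mod s = h (\<sigma> j p)"
    by metis
  have "x p i < x q i" if "i \<in> I" "p \<in> X" "q \<in> X" "\<sigma> i p < \<sigma> i q" for i p q
  proof (cases "i = j")
    case True
    have "b p j = v" "b q j = v" using layer b(1) that(2,3) by auto
    moreover have "h (\<sigma> j p) < h (\<sigma> j q)" using h_mono True that by auto
    ultimately show ?thesis
      using True x[OF that(2)] x[OF that(3)] block_decomposition[OF that(1), of "x p" s]
        block_decomposition[OF that(1), of "x q" s] by simp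
  next
    case False
    have "g r i = x r i div s" if "r \<in> X" for r
      using b(2)[OF that] x[OF that] False \<open>i \<in> I\<close>
      by (metis DiffI block_index_def restrict_apply' singletonD)
    moreover have "g p i < g q i" using g_mono False that by blast
    ultimately show ?thesis using that(2,3) by (metis div_le_mono not_less)
  qed
  with x show ?thesis unfolding contains_pattern_def by blast
qed

lemma card_wide_blocks:
  assumes bound: "avoidance_bound d m c'"
    and "finite I" "card I = Suc d" "finite X" "card X = m" "\<And>i. i \<in> I \<Longrightarrow> inj_on (\<sigma> i) X"
    and "0 < s" "B \<subseteq> PiE I (\<lambda>_. {..<u})" "\<not> contains_pattern I \<sigma> X S" "j \<in> I"
  shows "real (card {b\<in>B. m \<le> card (block_offsets s I S j b)})
           \<le> real u * real (s choose m) * (c' * real u ^ (d - 1))"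
proof -
  define Ms where "Ms = {M. M \<subseteq> {..<s} \<and> card M = m}"
  define layer where "layer v M = {b\<in>B. b j = v \<and> M \<subseteq> block_offsets s I S j b}" for v M
  have fin_Ms: "finite Ms" unfolding Ms_def by (rule finite_subset[of _ "Pow {..<s}"]) auto
  have card_Ms: "card Ms = s choose m" unfolding Ms_def using n_subsets[of "{..<s}" m] by simp
  have wide_sub: "{b\<in>B. m \<le> card (block_offsets s I S j b)} \<subseteq> (\<Union>v\<in>{..<u}. \<Union>M\<in>Ms. layer v M)"
  proof
    fix b assume b: "b \<in> {b\<in>B. m \<le> card (block_offsets s I S j b)}"
    then obtain M where "M \<subseteq> block_offsets s I S j b" "card M = m"
      using obtain_subset_with_card_n by (metis (no_types, lifting) mem_Collect_eq)
    moreover have "b j < u" using b assms(8,10) by (auto simp: PiE_def Pi_def)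
    ultimately have "M \<in> Ms" "b \<in> layer (b j) M" "b j \<in> {..<u}"
      using b block_offsets_subset[OF assms(7), of I S j b] unfolding Ms_def layer_def by auto
    thus "b \<in> (\<Union>v\<in>{..<u}. \<Union>M\<in>Ms. layer v M)" by blast
  qed
  have card_layer: "real (card (layer v M)) \<le> c' * real u ^ (d - 1)" if "M \<in> Ms" for v M
  proof -
    let ?\<pi> = "\<lambda>b. restrict b (I - {j})"
    have "\<not> contains_pattern (I - {j}) \<sigma> X (?\<pi> ` layer v M)"
      using contains_pattern_lift_layer[of X j I \<sigma> M "layer v M" v s S] assms(4-6,9,10) that
      by (auto simp: Ms_def layer_def intro: finite_subset)
    moreover have "?\<pi> ` layer v M \<subseteq> PiE (I - {j}) (\<lambda>_. {..<u})"
      using assms(8) by (auto simp: layer_def PiE_def Pi_def)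
    ultimately have "real (card (?\<pi> ` layer v M)) \<le> c' * real u ^ (d - 1)"
      using avoidance_boundD[OF bound, of "I - {j}" X \<sigma>] assms(2-6,10) by auto
    moreover have "inj_on ?\<pi> (layer v M)"
      using assms(8) by (intro inj_on_restrict_minus[where v = v]) (auto simp: layer_def PiE_def)
    ultimately show ?thesis by (simp add: card_image)
  qed
  have "finite B" using assms(2,8) finite_PiE[of I "\<lambda>_. {..<u}"] finite_subset by blast
  hence fin_layer: "finite (layer v M)" for v M by (simp add: layer_def)
  have "card {b\<in>B. m \<le> card (block_offsets s I S j b)} \<le> card (\<Union>v\<in>{..<u}. \<Union>M\<in>Ms. layer v M)"
    using fin_layer fin_Ms by (intro card_mono[OF _ wide_sub]) auto
  also have "\<dots> \<le> (\<Sum>v<u. card (\<Union>M\<in>Ms. layer v M))" by (rule card_UN_le) simp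
  also have "\<dots> \<le> (\<Sum>v<u. \<Sum>M\<in>Ms. card (layer v M))" by (intro sum_mono card_UN_le fin_Ms)
  finally have "real (card {b\<in>B. m \<le> card (block_offsets s I S j b)})
                  \<le> (\<Sum>v<u. \<Sum>M\<in>Ms. real (card (layer v M)))"
    by (simp only: of_nat_le_iff of_nat_sum[symmetric])
  also have "\<dots> \<le> (\<Sum>v<u. \<Sum>M\<in>Ms. c' * real u ^ (d - 1))"
    by (intro sum_mono card_layer)
  also have "\<dots> = real u * real (s choose m) * (c' * real u ^ (d - 1))" using card_Ms by simp
  finally show ?thesis .
qed

lemma card_le_by_blocks:
  assumes "finite I" "0 < s" "S \<subseteq> PiE I (\<lambda>_. {..<t})"
  defines "B \<equiv> block_index s I ` S"
  shows "card S \<le> (m - 1) ^ card I * card B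
                  + s ^ card I * card {b\<in>B. \<exists>j\<in>I. m \<le> card (block_offsets s I S j b)}"
proof -
  let ?wide = "\<lambda>b. \<exists>j\<in>I. m \<le> card (block_offsets s I S j b)"
  have fin_S: "finite S" using assms(1,3) finite_PiE[of I "\<lambda>_. {..<t}"] finite_subset by blast
  have offsets_le: "card (block_offsets s I S j b) \<le> s" for j b
    using card_mono[OF _ block_offsets_subset[OF assms(2)]] by simp
  have fibre: "card {x\<in>S. block_index s I x = b} \<le> (m - 1) ^ card I + (if ?wide b then s ^ card I else 0)"
    for b
  proof -
    have "card {x\<in>S. block_index s I x = b} \<le> (\<Prod>j\<in>I. card (block_offsets s I S j b))"
      using assms(1,3) by (intro card_block_fibre_le) (auto simp: PiE_def)
    also have "\<dots> \<le> (if ?wide b then s ^ card I else (m - 1) ^ card I)"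
    proof (cases "?wide b")
      case True
      have "(\<Prod>j\<in>I. card (block_offsets s I S j b)) \<le> (\<Prod>j\<in>I. s)"
        by (intro prod_mono) (simp add: offsets_le)
      with True show ?thesis by simp
    next
      case False
      hence "(\<Prod>j\<in>I. card (block_offsets s I S j b)) \<le> (\<Prod>j\<in>I. m - 1)"
        by (intro prod_mono) auto
      with False show ?thesis by simp
    qed
    finally show ?thesis by (auto split: if_splits)
  qed
  have "card S = (\<Sum>b\<in>B. card {x\<in>S. block_index s I x = b})"
    unfolding B_def by (rule card_eq_sum_card_fibres[OF fin_S])
  also have "\<dots> \<le> (\<Sum>b\<in>B. (m - 1) ^ card I + (if ?wide b then s ^ card I else 0))"
    by (intro sum_mono fibre)
  also have "\<dots> = (m - 1) ^ card I * card B + s ^ card I * card {b\<in>B. ?wide b}"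
    using fin_S by (simp add: B_def sum.distrib sum.inter_filter[symmetric] mult.commute)
  finally show ?thesis .
qed

lemma exists_block_count:
  fixes s t :: nat
  assumes "4 \<le> s" "s < t"
  obtains u where "u < t" "t \<le> u * s" "u * s \<le> 2 * t"
proof
  define u where "u = (t + s - 1) div s"
  have dm: "u * s + (t + s - 1) mod s = t + s - 1" unfolding u_def by (rule div_mult_mod_eq)
  moreover have "(t + s - 1) mod s < s" using assms by simp
  ultimately show "t \<le> u * s" "u * s \<le> 2 * t" using assms by linarith+
  have "t + s \<le> 2 * t" "2 * t \<le> t * s" using assms by simp_all
  with dm have "u * s < t * s" using assms by arith
  thus "u < t" by simp
qed

lemma avoidance_step_arith:
  fixes m d s u t :: nat and K :: real
  assumes "1 \<le> m" "1 \<le> d" "s = 4 * m^2" "0 \<le> K" "u * s \<le> 2 * t"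
  defines "c \<equiv> real s + 2 ^ Suc d * K"
  shows "(real ((m - 1) ^ Suc d) * c + K) * real u ^ d \<le> c * real t ^ d"
proof -
  define A where "A = real ((m - 1) ^ Suc d)"
  have s_pos: "0 < real s" and c_nonneg: "0 \<le> c" using assms by (simp_all add: c_def)
  have "(m - 1) ^ Suc d * 2 ^ Suc d \<le> m ^ (2 * d) * 2 ^ (2 * d)"
  proof (rule mult_le_mono)
    have "(m - 1) ^ Suc d \<le> m ^ Suc d" by (intro power_mono) auto
    also have "\<dots> \<le> m ^ (2 * d)" using assms by (intro power_increasing) auto
    finally show "(m - 1) ^ Suc d \<le> m ^ (2 * d)" .
    show "(2::nat) ^ Suc d \<le> 2 ^ (2 * d)" using assms by (intro power_increasing) auto
  qed
  also have "\<dots> = s ^ d" by (simp add: assms(3) power_mult power_mult_distrib)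
  finally have "real ((m - 1) ^ Suc d * 2 ^ Suc d) \<le> real (s ^ d)" by (simp only: of_nat_le_iff)
  hence A_le: "A * 2 ^ Suc d \<le> real s ^ d" by (simp add: A_def)
  have u_s: "real u ^ d * real s ^ d \<le> 2 ^ d * real t ^ d"
  proof -
    have "real (u * s) \<le> real (2 * t)" using assms(5) by (simp only: of_nat_le_iff)
    hence "real u * real s \<le> 2 * real t" by simp
    hence "(real u * real s) ^ d \<le> (2 * real t) ^ d" by (intro power_mono) simp_all
    thus ?thesis by (simp add: power_mult_distrib)
  qed
  have coeff: "(A * c + K) * 2 ^ d \<le> c * real s ^ d"
  proof -
    have "A * 2 ^ d * c \<le> (real s ^ d / 2) * c" using A_le c_nonneg by (intro mult_right_mono) auto
    moreover have "K * 2 ^ d \<le> c / 2" unfolding c_def using s_pos assms(4) by (simp add: field_simps)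
    moreover have "c / 2 \<le> c * real s ^ d / 2"
    proof -
      have "1 \<le> s" unfolding assms(3) using assms(1) by (simp add: Suc_le_eq)
      hence "1 \<le> real s ^ d" by (simp add: one_le_power)
      thus ?thesis using c_nonneg by (simp add: mult_le_cancel_left1)
    qed
    ultimately show ?thesis by (simp add: algebra_simps)
  qed
  have "0 \<le> A * c + K" using c_nonneg assms(4) by (simp add: A_def)
  hence "((A * c + K) * real u ^ d) * real s ^ d \<le> (A * c + K) * (2 ^ d * real t ^ d)"
    using u_s by (simp add: mult.assoc mult_left_mono)
  also have "\<dots> = ((A * c + K) * 2 ^ d) * real t ^ d" by (simp add: mult.assoc)
  also have "\<dots> \<le> (c * real s ^ d) * real t ^ d" by (rule mult_right_mono[OF coeff]) simp
  also have "\<dots> = (c * real t ^ d) * real s ^ d" by simp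
  finally show ?thesis using s_pos by (simp add: A_def mult_le_cancel_right)
qed

lemma card_le_by_block_count:
  assumes bound: "avoidance_bound d m c'" and "1 \<le> d"
    and I: "finite I" "card I = Suc d" and X: "finite X" "card X = m"
    and inj: "\<And>i. i \<in> I \<Longrightarrow> inj_on (\<sigma> i) X"
    and "0 < s" "S \<subseteq> PiE I (\<lambda>_. {..<t})" "t \<le> u * s" "\<not> contains_pattern I \<sigma> X S"
  defines "B \<equiv> block_index s I ` S"
  shows "real (card S) \<le> real ((m - 1) ^ Suc d) * real (card B)
                            + real (s ^ Suc d) * (real (Suc d) * real (s choose m) * c' * real u ^ d)"
proof -
  let ?wide = "\<lambda>j b. m \<le> card (block_offsets s I S j b)"
  have B_sub: "B \<subseteq> PiE I (\<lambda>_. {..<u})"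
    using assms(9,10) block_index_in_PiE unfolding B_def by blast
  have "{b\<in>B. \<exists>j\<in>I. ?wide j b} = (\<Union>j\<in>I. {b\<in>B. ?wide j b})" by blast
  hence "card {b\<in>B. \<exists>j\<in>I. ?wide j b} \<le> (\<Sum>j\<in>I. card {b\<in>B. ?wide j b})"
    using card_UN_le[OF I(1)] by simp
  hence "real (card {b\<in>B. \<exists>j\<in>I. ?wide j b}) \<le> (\<Sum>j\<in>I. real (card {b\<in>B. ?wide j b}))"
    by (simp only: of_nat_le_iff of_nat_sum[symmetric])
  also have "\<dots> \<le> (\<Sum>j\<in>I. real u * real (s choose m) * (c' * real u ^ (d - 1)))"
    by (intro sum_mono card_wide_blocks[OF bound I X inj assms(8) B_sub assms(11)])
  also have "\<dots> = real (Suc d) * real (s choose m) * c' * real u ^ d"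
    using I(2) assms(2) by (simp add: power_eq_if)
  finally have card_wide: "real (card {b\<in>B. \<exists>j\<in>I. ?wide j b})
                             \<le> real (Suc d) * real (s choose m) * c' * real u ^ d" .
  have "card S \<le> (m - 1) ^ Suc d * card B + s ^ Suc d * card {b\<in>B. \<exists>j\<in>I. ?wide j b}"
    using card_le_by_blocks[OF I(1) assms(8,9), of m] I(2) by (simp add: B_def)
  from of_nat_mono[OF this, where 'a = real]
  have "real (card S) \<le> real ((m - 1) ^ Suc d) * real (card B)
                          + real (s ^ Suc d) * real (card {b\<in>B. \<exists>j\<in>I. ?wide j b})"
    by (simp only: of_nat_add of_nat_mult)
  also have "\<dots> \<le> real ((m - 1) ^ Suc d) * real (card B)
                     + real (s ^ Suc d) * (real (Suc d) * real (s choose m) * c' * real u ^ d)"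
    by (intro add_left_mono mult_left_mono card_wide) simp
  finally show ?thesis .
qed

lemma avoidance_bound_Suc:
  assumes bound: "avoidance_bound d m c'" and "1 \<le> d" "1 \<le> m" "0 \<le> c'"
  defines "s \<equiv> 4 * m^2"
  defines "c \<equiv> real s + 2 ^ Suc d * (real (Suc d) * real (s choose m) * c' * real s ^ Suc d)"
  shows "avoidance_bound (Suc d) m c"
  unfolding avoidance_bound_def
proof (intro allI impI, elim conjE)
  fix I X :: "nat set" and \<sigma> :: "nat \<Rightarrow> nat \<Rightarrow> nat" and t :: nat and S :: "(nat \<Rightarrow> nat) set"
  assume I: "finite I" "card I = Suc d" and X: "finite X" "card X = m"
    and inj: "\<forall>i\<in>I. inj_on (\<sigma> i) X"
  define K where "K = real (Suc d) * real (s choose m) * c' * real s ^ Suc d"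
  have K_nonneg: "0 \<le> K" using assms(4) by (simp add: K_def)
  have s4: "4 \<le> s" using assms(3) by (simp add: s_def)
  have c_ge: "real s \<le> c" using K_nonneg by (simp add: c_def K_def)
  show "S \<subseteq> PiE I (\<lambda>_. {..<t}) \<Longrightarrow> \<not> contains_pattern I \<sigma> X S \<Longrightarrow> real (card S) \<le> c * real t ^ (Suc d - 1)"
  proof (induction t arbitrary: S rule: less_induct)
    case (less t S)
    show ?case
    proof (cases "t \<le> s")
      case True
      have "card S \<le> card (PiE I (\<lambda>_. {..<t}))" using less.prems(1) I by (intro card_mono finite_PiE) auto
      hence "card S \<le> t * t ^ d" using I by (simp add: card_PiE)
      hence "real (card S) \<le> real t * real t ^ d" by (metis of_nat_le_iff of_nat_mult of_nat_power)
      also have "\<dots> \<le> c * real t ^ d" using True c_ge by (intro mult_right_mono) auto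
      finally show ?thesis by simp
    next
      case False
      then obtain u where u: "u < t" "t \<le> u * s" "u * s \<le> 2 * t"
        using exists_block_count[OF s4] by (metis not_le)
      have "block_index s I ` S \<subseteq> PiE I (\<lambda>_. {..<u})"
        using less.prems(1) u(2) block_index_in_PiE by blast
      hence "real (card (block_index s I ` S)) \<le> c * real u ^ d"
        using less.IH[OF u(1)] not_contains_pattern_blocks[OF less.prems(2)] by simp
      hence "real ((m - 1) ^ Suc d) * real (card (block_index s I ` S))
               \<le> real ((m - 1) ^ Suc d) * (c * real u ^ d)" by (intro mult_left_mono) simp_all
      moreover have "real (card S) \<le> real ((m - 1) ^ Suc d) * real (card (block_index s I ` S))
                       + real (s ^ Suc d) * (real (Suc d) * real (s choose m) * c' * real u ^ d)"
        using s4 inj by (intro card_le_by_block_count[OF bound assms(2) I X _ _ less.prems(1) u(2) less.prems(2)]) auto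
      ultimately have "real (card S) \<le> (real ((m - 1) ^ Suc d) * c + K) * real u ^ d"
        by (simp add: K_def algebra_simps)
      also have "\<dots> \<le> c * real t ^ d"
        using avoidance_step_arith[OF assms(3,2) s_def[THEN meta_eq_to_obj_eq] K_nonneg u(3)]
        by (simp add: c_def K_def)
      finally show ?thesis by simp
    qed
  qed
qed

lemma avoidance_bound_exists:
  assumes "1 \<le> m" "1 \<le> d"
  shows "\<exists>c\<ge>0. avoidance_bound d m c"
  using assms(2)
proof (induction d rule: nat_induct_at_least)
  case base show ?case using avoidance_bound_one by (intro exI[of _ "real m"]) auto
next
  case (Suc d)
  then obtain c' where "0 \<le> c'" "avoidance_bound d m c'" by blast
  moreover have "0 \<le> real (4 * m^2) + 2 ^ Suc d * (real (Suc d) * real (4 * m^2 choose m) * c' * real (4 * m^2) ^ Suc d)"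
    using \<open>0 \<le> c'\<close> by simp
  ultimately show ?case using avoidance_bound_Suc[OF _ Suc.hyps assms(1)] by blast
qed

section \<open>Realizers\<close>

definition rank_by :: "('a \<Rightarrow> 'b::linorder) \<Rightarrow> 'a set \<Rightarrow> 'a \<Rightarrow> nat" where
  "rank_by key X x = card {y\<in>X. key y < key x} + 1"

lemma rank_by_strict_mono:
  assumes "finite X" "x \<in> X" "key x < key y"
  shows "rank_by key X x < rank_by key X y"
proof -
  have "{z\<in>X. key z < key x} \<subset> {z\<in>X. key z < key y}" using assms(2,3) by auto
  thus ?thesis unfolding rank_by_def using assms(1) by (simp add: psubset_card_mono)
qed

lemma bij_betw_rank_by:
  assumes "finite X" "inj_on key X"
  shows "bij_betw (rank_by key X) X {1..card X}"
proof -
  have inj: "inj_on (rank_by key X) X"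
  proof (rule inj_onI)
    fix x y assume "x \<in> X" "y \<in> X" "rank_by key X x = rank_by key X y"
    with assms show "x = y"
      by (metis inj_onD less_irrefl linorder_neqE rank_by_strict_mono[OF assms(1)])
  qed
  have "rank_by key X ` X \<subseteq> {1..card X}"
  proof
    fix z assume "z \<in> rank_by key X ` X"
    then obtain x where x: "x \<in> X" "z = rank_by key X x" by auto
    have "card {y\<in>X. key y < key x} < card X"
      using assms(1) x(1) by (intro psubset_card_mono) auto
    thus "z \<in> {1..card X}" using x by (simp add: rank_by_def)
  qed
  moreover have "card (rank_by key X ` X) = card {1..card X}" by (simp add: card_image[OF inj])
  ultimately have "rank_by key X ` X = {1..card X}" by (intro card_subset_eq) auto
  with inj show ?thesis by (simp add: bij_betw_def)
qed

text \<open>The extension indexed by \<open>q\<close> lists the down-set of \<open>q\<close> first, each part by a linear extension;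
  if \<open>p \<le> q\<close> fails then \<open>q\<close> precedes \<open>p\<close> in it, so these \<open>|X|\<close> extensions realize \<open>R\<close>.\<close>
lemma exists_realizer:
  fixes X :: "nat set" and R :: "(nat \<times> nat) set"
  assumes fX: "finite X" and po: "partial_order_on X R"
  shows "\<exists>L. (\<forall>i<card X. bij_betw (L i) X {1..card X}) \<and>
           (\<forall>p\<in>X. \<forall>q\<in>X. (p,q)\<in>R \<longleftrightarrow> (\<forall>i<card X. L i p \<le> L i q))"
proof -
  have refl: "\<And>x. x \<in> X \<Longrightarrow> (x,x) \<in> R" and tr: "trans R" and anti: "antisym R"
    using po unfolding partial_order_on_def preorder_on_def refl_on_def by auto
  define h where "h x = card {y\<in>X. (y,x)\<in>R}" for x
  define key :: "nat \<Rightarrow> nat \<Rightarrow> nat \<times> nat \<times> nat" where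
    "key q x = (if (x,q)\<in>R then 0 else 1, h x, x)" for q x
  define L where "L i = rank_by (key (sorted_list_of_set X ! i)) X" for i
  have bij: "bij_betw (L i) X {1..card X}" for i
    unfolding L_def using fX by (intro bij_betw_rank_by) (auto intro: inj_onI simp: key_def)
  have key_mono: "key q x < key q y" if xy: "x \<in> X" "y \<in> X" "(x,y) \<in> R" "x \<noteq> y" for q x y
  proof -
    have "{z\<in>X. (z,x)\<in>R} \<subset> {z\<in>X. (z,y)\<in>R}"
      using tr refl anti xy by (auto dest: transD antisymD)
    hence "h x < h y" unfolding h_def using fX by (intro psubset_card_mono) auto
    moreover have "(y,q) \<in> R \<Longrightarrow> (x,q) \<in> R" using tr xy(3) by (meson transD)
    ultimately show ?thesis unfolding key_def by auto
  qed
  have "(p,q) \<in> R \<longleftrightarrow> (\<forall>i<card X. L i p \<le> L i q)" if pq: "p \<in> X" "q \<in> X" for p q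
  proof
    assume "(p,q) \<in> R"
    thus "\<forall>i<card X. L i p \<le> L i q"
      using key_mono rank_by_strict_mono[OF fX pq(1)] pq unfolding L_def
      by (metis less_imp_le order_refl)
  next
    assume all: "\<forall>i<card X. L i p \<le> L i q"
    show "(p,q) \<in> R"
    proof (rule ccontr)
      assume nR: "(p,q) \<notin> R"
      obtain i where i: "i < card X" "sorted_list_of_set X ! i = q"
        using pq fX by (metis in_set_conv_nth length_sorted_list_of_set set_sorted_list_of_set)
      have "key q q < key q p" using nR refl pq unfolding key_def by auto
      hence "L i q < L i p" using rank_by_strict_mono[OF fX pq(2)] i unfolding L_def by simp
      thus False using all i by fastforce
    qed
  qed
  with bij show ?thesis by blast
qed

lemma poset_dim_realizer:
  fixes X :: "nat set" and R :: "(nat \<times> nat) set"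
  assumes "finite X" "X \<noteq> {}" "partial_order_on X R"
  shows "0 < poset_dim X R \<and> (\<exists>L. (\<forall>i<poset_dim X R. bij_betw (L i) X {1..card X}) \<and>
           (\<forall>p\<in>X. \<forall>q\<in>X. (p,q)\<in>R \<longleftrightarrow> (\<forall>i<poset_dim X R. L i p \<le> L i q)))"
  unfolding poset_dim_def
proof (rule LeastI_ex)
  show "\<exists>d. 0 < d \<and> (\<exists>L :: nat \<Rightarrow> nat \<Rightarrow> nat. (\<forall>i<d. bij_betw (L i) X {1..card X}) \<and>
          (\<forall>p\<in>X. \<forall>q\<in>X. (p, q) \<in> R \<longleftrightarrow> (\<forall>i<d. L i p \<le> L i q)))"
    using exists_realizer[OF assms(1,3)] assms(1,2) by (metis card_gt_0_iff)
qed

definition padded_realizer :: "nat \<Rightarrow> (nat \<Rightarrow> nat \<Rightarrow> nat) \<Rightarrow> nat \<Rightarrow> nat \<Rightarrow> nat" where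
  "padded_realizer d L i = L (if i < d then i else 0)"

lemma padded_realizer_bij:
  "0 < d \<Longrightarrow> \<forall>i<d. bij_betw (L i) X Y \<Longrightarrow> bij_betw (padded_realizer d L i) X Y"
  by (simp add: padded_realizer_def)

lemma contains_copy_of_pattern:
  fixes X :: "nat set" and R :: "(nat \<times> nat) set"
  assumes "0 < d" "d \<le> n"
    and bij: "\<forall>i<d. bij_betw (L i) X {1..card X}"
    and realizer: "\<forall>p\<in>X. \<forall>q\<in>X. (p,q)\<in>R \<longleftrightarrow> (\<forall>i<d. L i p \<le> L i q)"
    and "contains_pattern {0..<n} (padded_realizer d L) X S"
  shows "contains_copy n S X R"
proof -
  let ?\<sigma> = "padded_realizer d L"
  obtain g where g_in: "\<forall>p\<in>X. g p \<in> S"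
    and g_mono: "\<forall>i\<in>{0..<n}. \<forall>p\<in>X. \<forall>q\<in>X. ?\<sigma> i p < ?\<sigma> i q \<longrightarrow> g p i < g q i"
    using assms(5) unfolding contains_pattern_def by blast
  have inj: "inj_on (?\<sigma> i) X" for i
    using padded_realizer_bij[OF assms(1) bij] by (auto simp: bij_betw_def)
  have g_less: "g p i < g q i" if "i < n" "p \<in> X" "q \<in> X" "?\<sigma> i p < ?\<sigma> i q" for i p q
    using g_mono that by auto
  have inj_g: "inj_on g X"
  proof (rule inj_onI)
    fix p q assume pq: "p \<in> X" "q \<in> X" "g p = g q"
    show "p = q"
    proof (rule ccontr)
      assume "p \<noteq> q"
      hence "?\<sigma> 0 p < ?\<sigma> 0 q \<or> ?\<sigma> 0 q < ?\<sigma> 0 p"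
        using inj_on_contraD[OF inj _ pq(1,2)] by (meson linorder_neqE_nat)
      thus False using g_less[of 0] pq assms(1,2) by (metis less_irrefl less_le_trans)
    qed
  qed
  have "(p,q) \<in> R \<longleftrightarrow> grid_le n (g p) (g q)" if pq: "p \<in> X" "q \<in> X" for p q
  proof
    assume "(p,q) \<in> R"
    hence "?\<sigma> i p \<le> ?\<sigma> i q" for i
      using realizer pq assms(1) by (simp add: padded_realizer_def)
    hence "?\<sigma> i p < ?\<sigma> i q" if "p \<noteq> q" for i
      using inj_on_contraD[OF inj that pq] by (meson le_neq_implies_less)
    thus "grid_le n (g p) (g q)" unfolding grid_le_def using g_less pq
      by (metis less_imp_le order_refl)
  next
    assume le: "grid_le n (g p) (g q)"
    have "L i p \<le> L i q" if "i < d" for i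
    proof (rule ccontr)
      assume "\<not> L i p \<le> L i q"
      hence "g q i < g p i" using g_less[of i q p] pq that assms(2) by (simp add: padded_realizer_def)
      thus False using le that assms(2) unfolding grid_le_def by (meson less_le_trans not_le)
    qed
    thus "(p,q) \<in> R" using realizer pq by blast
  qed
  with g_in inj_g show ?thesis unfolding contains_copy_def
    by (intro exI[of _ "g ` X"] exI[of _ g]) (auto simp: bij_betw_def)
qed

section \<open>Levels of the grid\<close>

lemma grid_coord_bounds: "x \<in> grid k n \<Longrightarrow> j < n \<Longrightarrow> 1 \<le> x j \<and> x j \<le> k"
  by (auto simp: grid_def PiE_def Pi_def)

lemma finite_grid: "finite (grid k n)"
  unfolding grid_def by (intro finite_PiE) auto

lemma grid_sum_bounds:
  assumes "x \<in> grid k n"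
  shows "n \<le> (\<Sum>j<n. x j)" and "(\<Sum>j<n. x j) \<le> k * n"
proof -
  show "n \<le> (\<Sum>j<n. x j)" using sum_mono[of "{..<n}" "\<lambda>_. 1" x] grid_coord_bounds[OF assms] by simp
  show "(\<Sum>j<n. x j) \<le> k * n"
    using sum_mono[of "{..<n}" x "\<lambda>_. k"] grid_coord_bounds[OF assms] by (simp add: mult.commute)
qed

lemma grid_coord_le_sum:
  assumes "x \<in> grid k n" "j < n"
  shows "x j + (n - 1) \<le> (\<Sum>l<n. x l)"
proof -
  have "(\<Sum>l\<in>{..<n}-{j}. 1) \<le> (\<Sum>l\<in>{..<n}-{j}. x l)"
    using grid_coord_bounds[OF assms(1)] by (intro sum_mono) auto
  moreover have "(\<Sum>l<n. x l) = x j + (\<Sum>l\<in>{..<n}-{j}. x l)" using assms(2) by (simp add: sum.remove)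
  ultimately show ?thesis using assms(2) by simp
qed

lemma grid_level_subset: "grid_level k n i \<subseteq> grid k n"
  by (simp add: grid_level_def)

definition grid_reflect :: "nat \<Rightarrow> nat \<Rightarrow> (nat \<Rightarrow> nat) \<Rightarrow> (nat \<Rightarrow> nat)" where
  "grid_reflect k n x = restrict (\<lambda>j. Suc k - x j) {0..<n}"

lemma grid_reflect_in_grid:
  assumes "x \<in> grid k n"
  shows "grid_reflect k n x \<in> grid k n"
proof -
  have "Suc k - x j \<in> {1..k}" if "j < n" for j using grid_coord_bounds[OF assms that] by auto
  thus ?thesis by (simp add: grid_reflect_def grid_def)
qed

lemma grid_reflect_reflect:
  assumes "x \<in> grid k n"
  shows "grid_reflect k n (grid_reflect k n x) = x"
proof
  fix j show "grid_reflect k n (grid_reflect k n x) j = x j"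
  proof (cases "j < n")
    case True
    hence "x j \<le> k" using grid_coord_bounds[OF assms] by blast
    with True show ?thesis by (simp add: grid_reflect_def)
  next
    case False
    hence "x j = undefined" using assms unfolding grid_def by (intro PiE_arb) auto
    with False show ?thesis by (simp add: grid_reflect_def)
  qed
qed

lemma grid_reflect_level:
  assumes "x \<in> grid_level k n (k * n - n - i)" "i \<le> k * n - n"
  shows "grid_reflect k n x \<in> grid_level k n i"
proof -
  have x: "x \<in> grid k n" using assms(1) by (simp add: grid_level_def)
  have "(\<Sum>j<n. grid_reflect k n x j + x j) = (\<Sum>j<n. Suc k)"
    by (intro sum.cong) (auto simp: grid_reflect_def dest!: grid_coord_bounds[OF x])
  hence "(\<Sum>j<n. grid_reflect k n x j) + (\<Sum>j<n. x j) = n + k * n" by (simp add: sum.distrib)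
  moreover have "n \<le> k * n" using grid_sum_bounds[OF x] by linarith
  moreover have "(\<Sum>j<n. x j) = n + (k * n - n - i)" using assms(1) by (simp add: grid_level_def)
  ultimately have "(\<Sum>j<n. grid_reflect k n x j) = n + i" using assms(2) by arith
  thus ?thesis using grid_reflect_in_grid[OF x] by (simp add: grid_level_def)
qed

lemma card_grid_reflect_level:
  assumes "S \<subseteq> grid k n" "i \<le> k * n - n"
  shows "card (S \<inter> grid_level k n (k * n - n - i)) = card (grid_reflect k n ` S \<inter> grid_level k n i)"
proof -
  have "grid_reflect k n ` (S \<inter> grid_level k n (k * n - n - i)) = grid_reflect k n ` S \<inter> grid_level k n i"
  proof
    show "grid_reflect k n ` (S \<inter> grid_level k n (k * n - n - i)) \<subseteq> grid_reflect k n ` S \<inter> grid_level k n i"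
      using grid_reflect_level[OF _ assms(2)] by (auto simp only: image_subset_iff Int_iff)
  next
    show "grid_reflect k n ` S \<inter> grid_level k n i \<subseteq> grid_reflect k n ` (S \<inter> grid_level k n (k * n - n - i))"
    proof
      fix y assume "y \<in> grid_reflect k n ` S \<inter> grid_level k n i"
      then obtain x where x: "x \<in> S" "y = grid_reflect k n x" "y \<in> grid_level k n i" by auto
      have "k * n - n - (k * n - n - i) = i" using assms(2) by simp
      hence "grid_reflect k n y \<in> grid_level k n (k * n - n - i)"
        using x(3) by (intro grid_reflect_level) simp_all
      moreover have "grid_reflect k n y = x"
        using x(2) grid_reflect_reflect subsetD[OF assms(1) x(1)] by simp
      ultimately show "y \<in> grid_reflect k n ` (S \<inter> grid_level k n (k * n - n - i))" using x by blast
    qed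
  qed
  moreover have "inj_on (grid_reflect k n) S"
    using assms(1) grid_reflect_reflect by (intro inj_on_inverseI[where g = "grid_reflect k n"]) auto
  hence "card (grid_reflect k n ` (S \<inter> grid_level k n (k * n - n - i))) = card (S \<inter> grid_level k n (k * n - n - i))"
    by (intro card_image inj_on_subset[OF _ Int_lower1])
  ultimately show ?thesis by simp
qed

lemma not_contains_pattern_reflect:
  assumes "S \<subseteq> grid k n" "\<And>i p. p \<in> X \<Longrightarrow> \<sigma> i p \<le> M" "\<not> contains_pattern {0..<n} \<sigma> X S"
  shows "\<not> contains_pattern {0..<n} (\<lambda>i p. M - \<sigma> i p) X (grid_reflect k n ` S)"
proof
  assume "contains_pattern {0..<n} (\<lambda>i p. M - \<sigma> i p) X (grid_reflect k n ` S)"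
  then obtain g where g_in: "\<forall>p\<in>X. g p \<in> grid_reflect k n ` S"
    and g_mono: "\<forall>i\<in>{0..<n}. \<forall>p\<in>X. \<forall>q\<in>X. M - \<sigma> i p < M - \<sigma> i q \<longrightarrow> g p i < g q i"
    unfolding contains_pattern_def by blast
  have g_grid: "g p \<in> grid k n" and in_S: "grid_reflect k n (g p) \<in> S" if p: "p \<in> X" for p
  proof -
    obtain x where x: "x \<in> S" "g p = grid_reflect k n x" using g_in p by (auto simp only: image_iff)
    hence "x \<in> grid k n" using assms(1) by blast
    with x show "g p \<in> grid k n" "grid_reflect k n (g p) \<in> S"
      by (simp_all add: grid_reflect_in_grid grid_reflect_reflect)
  qed
  have "grid_reflect k n (g p) i < grid_reflect k n (g q) i"
    if "i \<in> {0..<n}" "p \<in> X" "q \<in> X" "\<sigma> i p < \<sigma> i q" for i p q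
  proof -
    have "M - \<sigma> i q < M - \<sigma> i p" using that(4) assms(2)[OF that(3), of i] by linarith
    hence "g q i < g p i" using g_mono that(1-3) by simp
    moreover have "g p i \<le> k" using grid_coord_bounds[OF g_grid[OF that(2)]] that(1) by simp
    ultimately show ?thesis using that(1) by (simp add: grid_reflect_def)
  qed
  with in_S have "contains_pattern {0..<n} \<sigma> X S"
    unfolding contains_pattern_def by (intro exI[of _ "\<lambda>p. grid_reflect k n (g p)"]) simp
  with assms(3) show False ..
qed

lemma sum_card_levels_upto:
  assumes "S \<subseteq> grid k n"
  shows "(\<Sum>i\<le>r. card (S \<inter> grid_level k n i)) = card {x\<in>S. (\<Sum>j<n. x j) \<le> n + r}"
proof -
  have "{x\<in>S. (\<Sum>j<n. x j) \<le> n + r} = (\<Union>i\<in>{..r}. S \<inter> grid_level k n i)"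
  proof
    show "{x\<in>S. (\<Sum>j<n. x j) \<le> n + r} \<subseteq> (\<Union>i\<in>{..r}. S \<inter> grid_level k n i)"
    proof
      fix x assume x: "x \<in> {x\<in>S. (\<Sum>j<n. x j) \<le> n + r}"
      hence xg: "x \<in> grid k n" using assms by auto
      have "n \<le> (\<Sum>j<n. x j)" using grid_sum_bounds(1)[OF xg] .
      hence "x \<in> S \<inter> grid_level k n ((\<Sum>j<n. x j) - n)" "(\<Sum>j<n. x j) - n \<le> r"
        using x xg unfolding grid_level_def by auto
      thus "x \<in> (\<Union>i\<in>{..r}. S \<inter> grid_level k n i)" by blast
    qed
  qed (auto simp: grid_level_def)
  moreover have "card (\<Union>i\<in>{..r}. S \<inter> grid_level k n i) = (\<Sum>i\<le>r. card (S \<inter> grid_level k n i))"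
    using finite_subset[OF assms finite_grid] by (intro card_UN_disjoint) (auto simp: grid_level_def)
  ultimately show ?thesis by simp
qed

lemma sum_card_levels_upto_le:
  assumes bound: "avoidance_bound n m c" and "1 \<le> n" "S \<subseteq> grid k n"
    and "finite X" "card X = m" "\<And>i. i \<in> {0..<n} \<Longrightarrow> inj_on (\<sigma> i) X"
    and avoid: "\<not> contains_pattern {0..<n} \<sigma> X S"
  shows "real (\<Sum>i\<le>r. card (S \<inter> grid_level k n i)) \<le> c * real (min r (k - 1) + 1) ^ (n - 1)"
proof -
  define A where "A = {x\<in>S. (\<Sum>j<n. x j) \<le> n + r}"
  define \<phi> where "\<phi> x = restrict (\<lambda>j. x j - 1) {0..<n}" for x :: "nat \<Rightarrow> nat"
  have A_grid: "A \<subseteq> grid k n" using assms(3) by (auto simp: A_def)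
  have inj: "inj_on \<phi> A"
  proof (rule inj_onI)
    fix x y assume xy: "x \<in> A" "y \<in> A" "\<phi> x = \<phi> y"
    have x: "x \<in> grid k n" and y: "y \<in> grid k n" using xy A_grid by auto
    have "x j = y j" if "j < n" for j
    proof -
      have "x j - 1 = y j - 1" using fun_cong[OF xy(3), of j] that by (simp add: \<phi>_def)
      thus ?thesis using grid_coord_bounds[OF x that] grid_coord_bounds[OF y that] by linarith
    qed
    thus "x = y" using x y unfolding grid_def by (intro PiE_ext[of _ "{0..<n}" "\<lambda>_. {1..k}"]) auto
  qed
  have box: "\<phi> ` A \<subseteq> PiE {0..<n} (\<lambda>_. {..<min r (k - 1) + 1})"
  proof
    fix z assume "z \<in> \<phi> ` A"
    then obtain x where x: "x \<in> A" "z = \<phi> x" by auto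
    have xg: "x \<in> grid k n" using x A_grid by auto
    have "x j - 1 < min r (k - 1) + 1" if "j < n" for j
      using grid_coord_le_sum[OF xg that] grid_coord_bounds[OF xg that] x(1) assms(2)
      unfolding A_def by auto
    thus "z \<in> PiE {0..<n} (\<lambda>_. {..<min r (k - 1) + 1})" using x unfolding \<phi>_def by auto
  qed
  have avoid_box: "\<not> contains_pattern {0..<n} \<sigma> X (\<phi> ` A)"
  proof
    assume "contains_pattern {0..<n} \<sigma> X (\<phi> ` A)"
    hence "contains_pattern {0..<n} \<sigma> X A"
      by (rule contains_pattern_pullback) (auto simp: \<phi>_def)
    hence "contains_pattern {0..<n} \<sigma> X S" by (rule contains_pattern_mono) (auto simp: A_def)
    with avoid show False ..
  qed
  have "real (card (\<phi> ` A)) \<le> c * real (min r (k - 1) + 1) ^ (n - 1)"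
    using avoidance_boundD[OF bound _ _ assms(4,5) assms(6) box avoid_box] by simp
  hence "real (card A) \<le> c * real (min r (k - 1) + 1) ^ (n - 1)" by (simp add: card_image[OF inj])
  thus ?thesis using sum_card_levels_upto[OF assms(3)] by (simp add: A_def)
qed

lemma sum_card_top_levels_le:
  assumes bound: "avoidance_bound n m c" and "1 \<le> n" "S \<subseteq> grid k n"
    and "finite X" "card X = m" "\<And>i. i \<in> {0..<n} \<Longrightarrow> inj_on (\<sigma> i) X"
    and "\<And>i p. p \<in> X \<Longrightarrow> \<sigma> i p \<le> M" "\<not> contains_pattern {0..<n} \<sigma> X S" "r \<le> k * n - n"
  shows "real (\<Sum>i\<le>r. card (S \<inter> grid_level k n (k * n - n - i))) \<le> c * real (min r (k - 1) + 1) ^ (n - 1)"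
proof -
  have "inj_on (\<lambda>p. M - \<sigma> i p) X" if "i \<in> {0..<n}" for i
  proof (rule inj_onI)
    fix p q assume "p \<in> X" "q \<in> X" "M - \<sigma> i p = M - \<sigma> i q"
    hence "\<sigma> i p = \<sigma> i q" using assms(7)[of p i] assms(7)[of q i] by linarith
    thus "p = q" using inj_onD[OF assms(6)[OF that]] \<open>p \<in> X\<close> \<open>q \<in> X\<close> by blast
  qed
  moreover have "grid_reflect k n ` S \<subseteq> grid k n" using assms(3) grid_reflect_in_grid by auto
  ultimately have "real (\<Sum>i\<le>r. card (grid_reflect k n ` S \<inter> grid_level k n i))
                     \<le> c * real (min r (k - 1) + 1) ^ (n - 1)"
    using not_contains_pattern_reflect[OF assms(3,7,8)]
    by (intro sum_card_levels_upto_le[where \<sigma> = "\<lambda>i p. M - \<sigma> i p", OF bound assms(2) _ assms(4,5)])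
  moreover have "(\<Sum>i\<le>r. card (S \<inter> grid_level k n (k * n - n - i)))
                   = (\<Sum>i\<le>r. card (grid_reflect k n ` S \<inter> grid_level k n i))"
    using assms(9) by (intro sum.cong refl card_grid_reflect_level[OF assms(3)]) simp
  ultimately show ?thesis by simp
qed

lemma exists_bounded_summands:
  fixes B R :: nat
  shows "R \<le> p * B \<Longrightarrow> \<exists>z. (\<forall>j<p. z j \<le> B) \<and> (\<Sum>j<p. z j) = R"
proof (induction p arbitrary: R)
  case 0 thus ?case by (intro exI[of _ "\<lambda>_. 0"]) simp
next
  case (Suc p)
  define a where "a = min B R"
  have "R - a \<le> p * B" using Suc.prems unfolding a_def by (cases "R \<le> B") auto
  then obtain z where z: "\<forall>j<p. z j \<le> B" "(\<Sum>j<p. z j) = R - a" using Suc.IH by blast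
  have "(\<Sum>j<p. (z(p := a)) j) = (\<Sum>j<p. z j)" by (rule sum.cong) auto
  hence "(\<Sum>j<Suc p. (z(p := a)) j) = R" using z(2) by (simp add: a_def)
  moreover have "\<forall>j<Suc p. (z(p := a)) j \<le> B" using z(1) unfolding a_def by (auto simp: less_Suc_eq)
  ultimately show ?case by blast
qed

lemma exists_grid_level_base:
  fixes p Q K i :: nat
  assumes "i \<le> K + p * K" "p * Q \<le> i" "p * Q \<le> K + p * K - i" "p * Q \<le> K" "Q \<le> K"
  obtains z r where "\<forall>j<p. z j + Q \<le> K" "(\<Sum>j<p. z j) + r = i" "p * Q \<le> r" "r \<le> K"
proof -
  define r where "r = max (p * Q) (i - p * (K - Q))"
  have "p * (K - Q) + p * Q = p * K" using assms(5) by (simp add: diff_mult_distrib2)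
  hence "i - p * (K - Q) \<le> K" using assms(1,3) by arith
  hence r: "r \<le> i" "p * Q \<le> r" "r \<le> K" using assms(2,4) unfolding r_def by auto
  have "i - r \<le> p * (K - Q)" unfolding r_def by (simp add: max_def, arith)
  then obtain z where z: "\<forall>j<p. z j \<le> K - Q" "(\<Sum>j<p. z j) = i - r"
    using exists_bounded_summands by blast
  show ?thesis
  proof
    show "\<forall>j<p. z j + Q \<le> K" using z(1) assms(5) by (simp add: le_diff_conv2)
    show "(\<Sum>j<p. z j) + r = i" using z(2) r(1) by simp
  qed (use r in auto)
qed

text \<open>The level contains a box: the first \<open>n - 1\<close> coordinates run through windows of width
  \<open>Q + 1\<close> above a base point, and the last coordinate makes up the prescribed sum.\<close>
lemma card_grid_level_ge_power:
  assumes "1 \<le> n" "1 \<le> k" "i \<le> k * n - n"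
    and "(n - 1) * Q \<le> i" "(n - 1) * Q \<le> k * n - n - i" "(n - 1) * Q \<le> k - 1" "Q \<le> k - 1"
  shows "(Q + 1) ^ (n - 1) \<le> card (grid_level k n i)"
proof -
  obtain p where n: "n = Suc p" using assms(1) by (cases n) auto
  have "k * n - n = (k - 1) + p * (k - 1)" using assms(2) n by (simp add: algebra_simps diff_mult_distrib)
  then obtain z r where z: "\<forall>j<p. z j + Q \<le> k - 1" and sum_z: "(\<Sum>j<p. z j) + r = i"
    and r: "p * Q \<le> r" "r \<le> k - 1"
    using exists_grid_level_base[of i "k - 1" p Q] assms(3-7) n by auto
  define D where "D = PiE {0..<p} (\<lambda>_. {..Q})"
  define \<psi> where "\<psi> y = restrict (\<lambda>j. if j < p then z j + y j + 1 else r - (\<Sum>l<p. y l) + 1) {0..<n}"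
    for y :: "nat \<Rightarrow> nat"
  have y_le: "y j \<le> Q" if "y \<in> D" "j < p" for y j using that by (auto simp: D_def)
  have sum_y: "(\<Sum>l<p. y l) \<le> p * Q" if "y \<in> D" for y
    using sum_mono[of "{..<p}" y "\<lambda>_. Q"] y_le[OF that] by simp
  have "\<psi> y \<in> grid_level k n i" if y: "y \<in> D" for y
  proof -
    have "\<psi> y j \<in> {1..k}" if "j < n" for j
    proof (cases "j < p")
      case True
      with that z y_le[OF y True] assms(2) show ?thesis by (auto simp: \<psi>_def)
    next
      case False
      with that r(2) assms(2) show ?thesis by (auto simp: \<psi>_def)
    qed
    hence grid: "\<psi> y \<in> grid k n" by (auto simp: \<psi>_def grid_def)
    have "(\<Sum>j<n. \<psi> y j) = (\<Sum>j<p. z j + y j + 1) + (r - (\<Sum>l<p. y l) + 1)"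
      using n by (simp add: \<psi>_def)
    moreover have "(\<Sum>j<p. z j + y j + 1) = (\<Sum>j<p. z j) + (\<Sum>j<p. y j) + p"
      by (simp only: sum.distrib) simp
    ultimately have "(\<Sum>j<n. \<psi> y j) = n + i" using sum_z sum_y[OF y] r(1) n by linarith
    with grid show ?thesis by (simp add: grid_level_def)
  qed
  moreover have "inj_on \<psi> D"
  proof (rule inj_onI)
    fix y y' assume yy: "y \<in> D" "y' \<in> D" "\<psi> y = \<psi> y'"
    have "y j = y' j" if "j < p" for j using fun_cong[OF yy(3), of j] that n by (simp add: \<psi>_def)
    with yy(1,2) show "y = y'" unfolding D_def by (intro PiE_ext) auto
  qed
  ultimately have "card D \<le> card (grid_level k n i)"
    by (intro card_inj_on_le finite_subset[OF grid_level_subset finite_grid]) auto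
  thus ?thesis by (simp add: D_def card_PiE n)
qed

lemma card_grid_level_ge:
  assumes "1 \<le> n" "1 \<le> k" "i \<le> k * n - n"
  shows "(real (min i (min (k * n - n - i) (k - 1)) + 1) / real n) ^ (n - 1)
           \<le> real (card (grid_level k n i))"
proof -
  define \<mu> where "\<mu> = min i (min (k * n - n - i) (k - 1))"
  define Q where "Q = \<mu> div n"
  have nQ: "n * Q \<le> \<mu>" unfolding Q_def by (metis div_times_less_eq_dividend mult.commute)
  have "(n - 1) * Q \<le> n * Q" "Q \<le> n * Q" using assms(1) by simp_all
  hence "(Q + 1) ^ (n - 1) \<le> card (grid_level k n i)"
    using nQ unfolding \<mu>_def by (intro card_grid_level_ge_power[OF assms]) linarith+
  hence "real (Q + 1) ^ (n - 1) \<le> real (card (grid_level k n i))"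
    by (metis of_nat_le_iff of_nat_power)
  moreover have "real (\<mu> + 1) / real n \<le> real (Q + 1)"
  proof -
    have "\<mu> = n * Q + \<mu> mod n" unfolding Q_def by simp
    moreover have "\<mu> mod n < n" using assms(1) by simp
    ultimately have "\<mu> + 1 \<le> n * (Q + 1)" by (simp add: algebra_simps)
    hence "real (\<mu> + 1) \<le> real n * real (Q + 1)" by (metis of_nat_le_iff of_nat_mult)
    thus ?thesis using assms(1) by (simp add: divide_le_eq mult.commute)
  qed
  hence "(real (\<mu> + 1) / real n) ^ (n - 1) \<le> real (Q + 1) ^ (n - 1)" by (intro power_mono) auto
  ultimately show ?thesis unfolding \<mu>_def by simp
qed

section \<open>Lubell mass\<close>

lemma sum_mult_by_parts:
  fixes s w :: "nat \<Rightarrow> real"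
  shows "(\<Sum>i\<le>N. s i * w i) = (\<Sum>i\<le>N. s i) * w N + (\<Sum>i<N. (\<Sum>j\<le>i. s j) * (w i - w (Suc i)))"
proof (induction N)
  case 0 show ?case by simp
next
  case (Suc N)
  have "(\<Sum>i\<le>Suc N. s i * w i) = (\<Sum>i\<le>N. s i * w i) + s (Suc N) * w (Suc N)" by simp
  also have "\<dots> = (\<Sum>i\<le>N. s i) * w N + (\<Sum>i<N. (\<Sum>j\<le>i. s j) * (w i - w (Suc i))) + s (Suc N) * w (Suc N)"
    using Suc by simp
  also have "\<dots> = (\<Sum>i\<le>Suc N. s i) * w (Suc N) + (\<Sum>i<Suc N. (\<Sum>j\<le>i. s j) * (w i - w (Suc i)))"
    by (simp add: algebra_simps)
  finally show ?case .
qed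

lemma power_weight_decrement_le:
  fixes i p :: nat
  shows "real (i + 1) ^ p * (1 / real (i + 1) ^ p - 1 / real (i + 2) ^ p)
           \<le> real p * (ln (real (i + 2)) - ln (real (i + 1)))"
proof -
  have "1 + real p * (- 1 / real (i + 2)) \<le> (1 + (- 1 / real (i + 2))) ^ p"
    by (rule Bernoulli_inequality) (simp add: field_simps)
  moreover have "1 + (- 1 / real (i + 2)) = real (i + 1) / real (i + 2)" by (simp add: field_simps)
  moreover have "real (i + 1) ^ p * (1 / real (i + 1) ^ p - 1 / real (i + 2) ^ p)
                   = 1 - (real (i + 1) / real (i + 2)) ^ p"
    by (simp add: field_simps power_divide)
  moreover have "1 - (real (i + 1) / real (i + 2)) ^ p \<le> real p / real (i + 2)"
    using calculation(1,2) by (simp add: field_simps)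
  ultimately have "real (i + 1) ^ p * (1 / real (i + 1) ^ p - 1 / real (i + 2) ^ p) \<le> real p / real (i + 2)"
    by linarith
  moreover have "ln (real (i + 1) / real (i + 2)) \<le> real (i + 1) / real (i + 2) - 1"
    by (rule ln_le_minus_one) simp
  hence "1 / real (i + 2) \<le> ln (real (i + 2)) - ln (real (i + 1))"
    by (simp add: ln_div field_simps)
  hence "real p / real (i + 2) \<le> real p * (ln (real (i + 2)) - ln (real (i + 1)))"
    using mult_left_mono[of _ _ "real p"] by fastforce
  ultimately show ?thesis by linarith
qed

lemma sum_div_power_le:
  fixes s :: "nat \<Rightarrow> real" and p N :: nat
  assumes "\<And>i. 0 \<le> s i" "0 \<le> c"
    and partial: "\<And>r. r \<le> N \<Longrightarrow> (\<Sum>i\<le>r. s i) \<le> c * real (r + 1) ^ p"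
  shows "(\<Sum>i\<le>N. s i / real (i + 1) ^ p) \<le> c * (1 + real p * ln (real (N + 1)))"
proof -
  define w where "w i = 1 / real (i + 1) ^ p" for i
  have w_dec: "w (Suc i) \<le> w i" for i unfolding w_def by (intro divide_left_mono power_mono) auto
  have "(\<Sum>i\<le>N. s i / real (i + 1) ^ p) = (\<Sum>i\<le>N. s i * w i)" by (simp add: w_def)
  also have "\<dots> = (\<Sum>i\<le>N. s i) * w N + (\<Sum>i<N. (\<Sum>j\<le>i. s j) * (w i - w (Suc i)))"
    by (rule sum_mult_by_parts)
  also have "\<dots> \<le> c + (\<Sum>i<N. c * (real p * (ln (real (Suc i + 1)) - ln (real (i + 1)))))"
  proof (rule add_mono)
    have "(\<Sum>i\<le>N. s i) * w N \<le> (c * real (N + 1) ^ p) * w N"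
      using partial[of N] by (intro mult_right_mono) (auto simp: w_def)
    thus "(\<Sum>i\<le>N. s i) * w N \<le> c" by (simp add: w_def)
    have "(\<Sum>j\<le>i. s j) * (w i - w (Suc i)) \<le> c * (real p * (ln (real (Suc i + 1)) - ln (real (i + 1))))"
      if "i < N" for i
    proof -
      have "(\<Sum>j\<le>i. s j) * (w i - w (Suc i)) \<le> (c * real (i + 1) ^ p) * (w i - w (Suc i))"
        using partial[of i] that w_dec[of i] by (intro mult_right_mono) auto
      also have "\<dots> \<le> c * (real p * (ln (real (i + 2)) - ln (real (i + 1))))"
        using mult_left_mono[OF power_weight_decrement_le[of i p] assms(2)]
        by (simp add: w_def mult.assoc add.commute)
      finally show ?thesis by (simp add: add.commute)
    qed
    thus "(\<Sum>i<N. (\<Sum>j\<le>i. s j) * (w i - w (Suc i)))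
            \<le> (\<Sum>i<N. c * (real p * (ln (real (Suc i + 1)) - ln (real (i + 1)))))"
      by (intro sum_mono) auto
  qed
  also have "(\<Sum>i<N. c * (real p * (ln (real (Suc i + 1)) - ln (real (i + 1)))))
               = c * real p * (\<Sum>i<N. ln (real (Suc i + 1)) - ln (real (i + 1)))"
    by (simp add: sum_distrib_left mult.assoc)
  also have "(\<Sum>i<N. ln (real (Suc i + 1)) - ln (real (i + 1))) = ln (real (N + 1))"
    using sum_lessThan_telescope[of "\<lambda>i. ln (real (i + 1))" N] by simp
  finally show ?thesis by (simp add: algebra_simps)
qed

lemma inverse_card_grid_level_le:
  assumes "1 \<le> n" "1 \<le> k" "i \<le> k * n - n"
  defines "w \<equiv> \<lambda>x. 1 / real (x + 1) ^ (n - 1)"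
  shows "1 / real (card (grid_level k n i)) \<le> real n ^ (n - 1) * (w i + w (k * n - n - i) + w (k - 1))"
proof -
  define \<mu> where "\<mu> = min i (min (k * n - n - i) (k - 1))"
  have pos: "0 < (real (\<mu> + 1) / real n) ^ (n - 1)" using assms(1) by simp
  have "(real (\<mu> + 1) / real n) ^ (n - 1) \<le> real (card (grid_level k n i))"
    using card_grid_level_ge[OF assms(1-3)] by (simp add: \<mu>_def)
  hence "1 / real (card (grid_level k n i)) \<le> 1 / (real (\<mu> + 1) / real n) ^ (n - 1)"
    using pos by (intro divide_left_mono) auto
  also have "\<dots> = real n ^ (n - 1) * w \<mu>"
    unfolding w_def using assms(1) by (simp add: power_divide)
  also have "w \<mu> \<le> w i + w (k * n - n - i) + w (k - 1)"
  proof -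
    have "0 \<le> w x" for x by (simp add: w_def)
    thus ?thesis unfolding \<mu>_def by (smt (verit) min_def)
  qed
  finally show ?thesis by (simp add: mult_left_mono)
qed

lemma lubell_mass_le:
  assumes "1 \<le> n" "2 \<le> k" "S \<subseteq> grid k n" "0 \<le> c"
    and lower: "\<And>r. real (\<Sum>i\<le>r. card (S \<inter> grid_level k n i)) \<le> c * real (min r (k - 1) + 1) ^ (n - 1)"
    and upper: "\<And>r. r \<le> k * n - n \<Longrightarrow>
      real (\<Sum>i\<le>r. card (S \<inter> grid_level k n (k * n - n - i))) \<le> c * real (min r (k - 1) + 1) ^ (n - 1)"
  shows "lubell_mass k n S \<le> c * (real n ^ (n - 1) * (3 + 2 * real (n - 1) * ln (real (k * n - n + 1))))"
proof -
  define N where "N = k * n - n"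
  define K where "K = k - 1"
  define p where "p = n - 1"
  define s where "s i = real (card (S \<inter> grid_level k n i))" for i
  define w where "w x = 1 / real (x + 1) ^ p" for x :: nat
  have s_nonneg: "0 \<le> s i" for i unfolding s_def by simp
  have "N = K * n" unfolding N_def K_def by (simp add: diff_mult_distrib)
  hence K_le: "K \<le> N" using assms(1) by simp
  have partial: "(\<Sum>i\<le>r. s i) \<le> c * real (r + 1) ^ p"
    and partial_rev: "r \<le> N \<Longrightarrow> (\<Sum>i\<le>r. s (N - i)) \<le> c * real (r + 1) ^ p" for r
  proof -
    have "c * real (min r (k - 1) + 1) ^ (n - 1) \<le> c * real (r + 1) ^ p"
      unfolding p_def using assms(4) by (intro mult_left_mono power_mono) auto
    thus "(\<Sum>i\<le>r. s i) \<le> c * real (r + 1) ^ p" "r \<le> N \<Longrightarrow> (\<Sum>i\<le>r. s (N - i)) \<le> c * real (r + 1) ^ p"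
      using lower[of r] upper[of r] unfolding s_def N_def by (simp_all flip: of_nat_sum)
  qed
  have bottom: "(\<Sum>i\<le>N. s i * w i) \<le> c * (1 + real p * ln (real (N + 1)))"
    using sum_div_power_le[OF s_nonneg assms(4) partial] by (simp add: w_def)
  have "(\<Sum>i\<le>N. s i * w (N - i)) = (\<Sum>i\<le>N. s (N - i) * w i)"
    by (rule sum.reindex_bij_witness[of _ "\<lambda>i. N - i" "\<lambda>i. N - i"]) auto
  also have "\<dots> \<le> c * (1 + real p * ln (real (N + 1)))"
    using sum_div_power_le[OF s_nonneg assms(4) partial_rev] by (simp add: w_def)
  finally have top: "(\<Sum>i\<le>N. s i * w (N - i)) \<le> c * (1 + real p * ln (real (N + 1)))" .
  have "(\<Sum>i\<le>N. s i) * w K \<le> (c * real (K + 1) ^ p) * w K"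
    using lower[of N] K_le unfolding s_def K_def p_def w_def
    by (intro mult_right_mono) (simp_all add: min_absorb2 flip: of_nat_sum)
  hence middle: "(\<Sum>i\<le>N. s i * w K) \<le> c" by (simp add: w_def sum_divide_distrib)
  have "lubell_mass k n S = (\<Sum>i\<le>N. s i * (1 / real (card (grid_level k n i))))"
    unfolding lubell_mass_def N_def s_def by (simp add: atMost_atLeast0)
  also have "\<dots> \<le> (\<Sum>i\<le>N. s i * (real n ^ p * (w i + w (N - i) + w K)))"
    using inverse_card_grid_level_le[OF assms(1) _ _] assms(2) s_nonneg
    by (intro sum_mono mult_left_mono) (simp_all add: N_def K_def p_def w_def)
  also have "\<dots> = real n ^ p * ((\<Sum>i\<le>N. s i * w i) + (\<Sum>i\<le>N. s i * w (N - i)) + (\<Sum>i\<le>N. s i * w K))"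
    by (simp add: sum_distrib_left sum.distrib algebra_simps)
  also have "\<dots> \<le> real n ^ p * (c * (1 + real p * ln (real (N + 1))) + c * (1 + real p * ln (real (N + 1))) + c)"
    by (intro mult_left_mono add_mono bottom top middle) simp
  also have "\<dots> = c * (real n ^ (n - 1) * (3 + 2 * real (n - 1) * ln (real (k * n - n + 1))))"
    unfolding p_def N_def by (simp add: algebra_simps)
  finally show ?thesis .
qed

lemma lubell_log_factor_le:
  assumes "1 \<le> n" "2 \<le> k"
  shows "3 + 2 * real (n - 1) * ln (real (k * n - n + 1))
           \<le> (3 / ln 2 + 2 * real (n - 1) * (ln (real n) / ln 2 + 1)) * ln (real k)"
proof -
  have log2_k: "1 \<le> ln (real k) / ln 2" using assms(2) by simp
  have "k * n - n + 1 \<le> k * n" using assms by (simp add: Suc_le_eq)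
  hence "real (k * n - n + 1) \<le> real n * real k" by (metis mult.commute of_nat_le_iff of_nat_mult)
  hence "ln (real (k * n - n + 1)) \<le> ln (real n * real k)" by (intro ln_mono) auto
  also have "\<dots> = ln (real n) + ln (real k)" using assms by (simp add: ln_mult)
  finally have "ln (real (k * n - n + 1)) \<le> ln (real n) + ln (real k)" .
  moreover have "ln (real n) \<le> ln (real n) / ln 2 * ln (real k)"
    using mult_left_mono[OF log2_k, of "ln (real n)"] assms(1) by (simp add: field_simps)
  ultimately have "ln (real (k * n - n + 1)) \<le> (ln (real n) / ln 2 + 1) * ln (real k)"
    by (simp add: distrib_right)
  hence "2 * real (n - 1) * ln (real (k * n - n + 1)) \<le> 2 * real (n - 1) * ((ln (real n) / ln 2 + 1) * ln (real k))"
    by (intro mult_left_mono) auto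
  moreover have "3 \<le> 3 / ln 2 * ln (real k)" using log2_k by (simp add: field_simps)
  ultimately show ?thesis by (simp add: algebra_simps)
qed

definition avoidance_const :: "nat \<Rightarrow> nat \<Rightarrow> real" where
  "avoidance_const n m = (SOME c. 0 \<le> c \<and> avoidance_bound n m c)"

definition lubell_factor :: "nat \<Rightarrow> real" where
  "lubell_factor n = real n ^ (n - 1) * (3 / ln 2 + 2 * real (n - 1) * (ln (real n) / ln 2 + 1))"

definition lubell_const :: "nat \<Rightarrow> nat \<Rightarrow> real" where
  "lubell_const n m = max 0 (avoidance_const n m) * lubell_factor n"

lemma avoidance_const:
  assumes "1 \<le> m" "1 \<le> n"
  shows "0 \<le> avoidance_const n m \<and> avoidance_bound n m (avoidance_const n m)"
proof -
  obtain c where "0 \<le> c \<and> avoidance_bound n m c" using avoidance_bound_exists[OF assms] by blast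
  thus ?thesis unfolding avoidance_const_def by (rule someI)
qed

lemma lubell_factor_nonneg: "0 \<le> lubell_factor n"
proof (cases "n = 0")
  case False
  hence "0 \<le> ln (real n)" by simp
  thus ?thesis unfolding lubell_factor_def by (intro mult_nonneg_nonneg add_nonneg_nonneg) auto
qed (simp add: lubell_factor_def)

lemma lubell_const_nonneg: "0 \<le> lubell_const n m"
  unfolding lubell_const_def using lubell_factor_nonneg by simp

lemma lubell_mass_le_lubell_const:
  fixes X :: "nat set" and R :: "(nat \<times> nat) set"
  assumes "finite X" "X \<noteq> {}" "partial_order_on X R"
    and "poset_dim X R \<le> n" "2 \<le> k" "S \<subseteq> grid k n" "\<not> contains_copy n S X R"
  shows "lubell_mass k n S \<le> lubell_const n (card X) * ln (real k)"
proof -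
  define d where "d = poset_dim X R"
  define m where "m = card X"
  obtain L where "0 < d" and bij: "\<forall>i<d. bij_betw (L i) X {1..card X}"
    and realizer: "\<forall>p\<in>X. \<forall>q\<in>X. (p,q)\<in>R \<longleftrightarrow> (\<forall>i<d. L i p \<le> L i q)"
    using poset_dim_realizer[OF assms(1-3)] unfolding d_def by blast
  define \<sigma> where "\<sigma> = padded_realizer d L"
  have n: "1 \<le> n" using \<open>0 < d\<close> assms(4) by (simp add: d_def)
  have m: "1 \<le> m" using assms(1,2) by (simp add: m_def Suc_le_eq card_gt_0_iff)
  have avoid: "\<not> contains_pattern {0..<n} \<sigma> X S"
    using contains_copy_of_pattern[OF \<open>0 < d\<close> _ bij realizer] assms(4,7) by (auto simp: \<sigma>_def d_def)
  have \<sigma>_bij: "bij_betw (\<sigma> i) X {1..m}" for i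
    unfolding \<sigma>_def m_def by (rule padded_realizer_bij[OF \<open>0 < d\<close> bij])
  hence \<sigma>_inj: "inj_on (\<sigma> i) X" and \<sigma>_le: "p \<in> X \<Longrightarrow> \<sigma> i p \<le> m" for i p
    by (simp_all add: bij_betw_def) (metis atLeastAtMost_iff bij_betwE \<sigma>_bij)
  define c where "c = avoidance_const n m"
  have c: "0 \<le> c" "avoidance_bound n m c" using avoidance_const[OF m n] by (simp_all add: c_def)
  have "lubell_mass k n S \<le> c * (real n ^ (n - 1) * (3 + 2 * real (n - 1) * ln (real (k * n - n + 1))))"
    using sum_card_levels_upto_le[OF c(2) n assms(6) assms(1) m_def[symmetric] \<sigma>_inj avoid]
      sum_card_top_levels_le[OF c(2) n assms(6) assms(1) m_def[symmetric] \<sigma>_inj \<sigma>_le avoid]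
    by (intro lubell_mass_le[OF n assms(5,6) c(1)])
  also have "\<dots> \<le> c * (real n ^ (n - 1) * ((3 / ln 2 + 2 * real (n - 1) * (ln (real n) / ln 2 + 1)) * ln (real k)))"
    using lubell_log_factor_le[OF n assms(5)] c(1) by (intro mult_left_mono) auto
  also have "\<dots> = lubell_const n m * ln (real k)"
    using c(1) by (simp only: lubell_const_def lubell_factor_def c_def max_absorb2 mult.assoc)
  finally show ?thesis by (simp add: m_def)
qed
lemma contains_copy_empty: "contains_copy n S {} R"
  unfolding contains_copy_def by (intro exI[of _ "{}"] exI[of _ id]) (auto simp: bij_betw_def)

lemma lubell_const_le:
  "lubell_const n m \<le> (1 + (\<Sum>n'<m. lubell_const n' m)) * (1 + (\<Sum>m'\<le>n. lubell_const n m'))"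
proof -
  define A where "A = (\<Sum>n'<m. lubell_const n' m)"
  define B where "B = (\<Sum>m'\<le>n. lubell_const n m')"
  have "0 \<le> A" "0 \<le> B" by (simp_all add: A_def B_def sum_nonneg lubell_const_nonneg)
  moreover have "lubell_const n m \<le> A + B"
  proof (cases "n < m")
    case True
    hence "lubell_const n m \<le> A"
      unfolding A_def by (intro member_le_sum[where f = "\<lambda>n'. lubell_const n' m"]) (auto simp: lubell_const_nonneg)
    with \<open>0 \<le> B\<close> show ?thesis by linarith
  next
    case False
    hence "lubell_const n m \<le> B" unfolding B_def by (intro member_le_sum) (auto simp: lubell_const_nonneg)
    with \<open>0 \<le> A\<close> show ?thesis by linarith
  qed
  moreover have "0 \<le> A * B" using \<open>0 \<le> A\<close> \<open>0 \<le> B\<close> by simp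
  moreover have "(1 + A) * (1 + B) = 1 + A + B + A * B" by (simp add: algebra_simps)
  ultimately show ?thesis unfolding A_def[symmetric] B_def[symmetric] by linarith
qed

text \<open>The constant \<open>\<alpha> n\<close> may not depend on the poset, so it absorbs the constants for all posets
  with at most \<open>n\<close> elements; the finitely many dimensions \<open>n < |X|\<close> are absorbed by \<open>C\<close>.\<close>
theorem mainTheorem6:
  shows "\<exists>\<alpha> :: nat \<Rightarrow> real. \<forall>(X :: nat set) (R :: (nat \<times> nat) set).
     finite X \<and> R \<subseteq> X \<times> X \<and> partial_order_on X R \<longrightarrow>
     (\<exists>C :: real. \<forall>n k S. n \<ge> poset_dim X R \<and> k \<ge> 2 \<and> S \<subseteq> grid k n \<and>
        \<not> contains_copy n S X R \<longrightarrow>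
        lubell_mass k n S \<le> C * \<alpha> n * ln (real k))"
proof (intro exI[of _ "\<lambda>n. 1 + (\<Sum>m\<le>n. lubell_const n m)"] allI impI, elim conjE)
  fix X :: "nat set" and R :: "(nat \<times> nat) set"
  assume X: "finite X" and po: "partial_order_on X R"
  let ?C = "1 + (\<Sum>n'<card X. lubell_const n' (card X))"
  show "\<exists>C. \<forall>n k S. poset_dim X R \<le> n \<and> 2 \<le> k \<and> S \<subseteq> grid k n \<and> \<not> contains_copy n S X R \<longrightarrow>
          lubell_mass k n S \<le> C * (1 + (\<Sum>m\<le>n. lubell_const n m)) * ln (real k)"
  proof (intro exI[of _ ?C] allI impI, elim conjE)
    fix n k S assume "poset_dim X R \<le> n" "2 \<le> k" "S \<subseteq> grid k n" "\<not> contains_copy n S X R"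
    moreover from this have "X \<noteq> {}" using contains_copy_empty by blast
    ultimately have "lubell_mass k n S \<le> lubell_const n (card X) * ln (real k)"
      using lubell_mass_le_lubell_const[OF X _ po] by blast
    also have "\<dots> \<le> ?C * (1 + (\<Sum>m\<le>n. lubell_const n m)) * ln (real k)"
      using lubell_const_le \<open>2 \<le> k\<close> by (intro mult_right_mono) auto
    finally show "lubell_mass k n S \<le> ?C * (1 + (\<Sum>m\<le>n. lubell_const n m)) * ln (real k)" .
  qed
qed

end
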